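(* Let $X$ be a completely regular Hausdorff space and let $A(X)$ be an adequate subspace of $C(X)$, with $A(X)$-compactification $\mathcal{A}X$. Let $x_0\in\mathcal{A}X$, $f\in A(X)$, and let $U$ be a neighborhood of $x_0(f)$ in $[-\infty,\infty]$; set $V=\{x\in\mathcal{A}X: x(f)\in U\}$. Then there exists $h\in A(X)$ with $0\le h\le 1_X$ and $x_0(h)=0$ such that $W=\{x\in\mathcal{A}X: x(h)<1\}\subseteq V$.
   Context: All functions are real-valued; $C(X)$ is the space of continuous real functions on $X$ and $1_X$ the constant function $1$. A subspace $A(X)\subseteq C(X)$ separates points from closed sets if for every $x\in X$ and closed $F\subseteq X$ with $x\notin F$ there is $f\in A(X)$ with $f(x)=1$ and $f=0$ on $F$. $A(X)$ is adequate if (a) it separates points from closed sets and contains the constant functions; (b) there is a continuous nondecreasing $g:\mathbb{R}\to\mathbb{R}$ with $g(t)=0$ for $t\le 0$ and $g(t)=1$ for $t\ge1$ such that $g\circ f\in A(X)$ for all $f\in A(X)$; (c) every $f\in A(X)$ can be written $f=f_1-f_2$ with $f_1,f_2\in A(X)$ nonnegative. The $A(X)$-compactification: let $[-\infty,\infty]$ carry the order topology; the map $i:X\to[-\infty,\infty]^{A(X)}$, $i(x)(\varphi)=\varphi(x)$, is a homeomorphic embedding; $\mathcal{A}X$ is the closure of $i(X)$ in the product $[-\infty,\infty]^{A(X)}$ (a compact Hausdorff space), and $X$ is identified with $i(X)\subseteq\mathcal{A}X$. Points $x\in\mathcal{A}X$ are functions on $A(X)$, and $x(f)$ denotes the value at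 $f$; the map $\hat f:\mathcal{A}X\to[-\infty,\infty]$, $\hat f(x)=x(f)$, is the unique continuous extension of $f$. *)

theory Defs
  imports "HOL-Analysis.Analysis" "HOL-Library.Extended_Real"
begin

definition is_subspace_CX :: "'a topology \<Rightarrow> ('a \<Rightarrow> real) set \<Rightarrow> bool" where
  "is_subspace_CX X A \<longleftrightarrow>
     (\<forall>f\<in>A. continuous_map X euclideanreal f) \<and>
     (\<lambda>x. 0) \<in> A \<and>
     (\<forall>f\<in>A. \<forall>g\<in>A. (\<lambda>x. f x + g x) \<in> A) \<and>
     (\<forall>c. \<forall>f\<in>A. (\<lambda>x. c * f x) \<in> A)"

definition separates_points_closed :: "'a topology \<Rightarrow> ('a \<Rightarrow> real) set \<Rightarrow> bool" where
  "separates_points_closed X A \<longleftrightarrow>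
     (\<forall>x\<in>topspace X. \<forall>F. closedin X F \<and> x \<notin> F \<longrightarrow>
        (\<exists>f\<in>A. f x = 1 \<and> (\<forall>y\<in>F. f y = 0)))"

definition adequate :: "'a topology \<Rightarrow> ('a \<Rightarrow> real) set \<Rightarrow> bool" where
  "adequate X A \<longleftrightarrow>
     is_subspace_CX X A \<and>
     separates_points_closed X A \<and> (\<forall>c. (\<lambda>x. c) \<in> A) \<and>
     (\<exists>g::real\<Rightarrow>real. continuous_on UNIV g \<and> mono g \<and>
        (\<forall>t\<le>0. g t = 0) \<and> (\<forall>t\<ge>1. g t = 1) \<and> (\<forall>f\<in>A. g \<circ> f \<in> A)) \<and>
     (\<forall>f\<in>A. \<exists>f1\<in>A. \<exists>f2\<in>A. (\<forall>x\<in>topspace X. f1 x \<ge> 0 \<and> f2 x \<ge> 0 \<and> f x = f1 x - f2 x))"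

definition AX_product :: "('a \<Rightarrow> real) set \<Rightarrow> (('a \<Rightarrow> real) \<Rightarrow> ereal) topology" where
  "AX_product A = product_topology (\<lambda>_. (euclidean :: ereal topology)) A"

definition AX_embed :: "('a \<Rightarrow> real) set \<Rightarrow> 'a \<Rightarrow> (('a \<Rightarrow> real) \<Rightarrow> ereal)" where
  "AX_embed A x = restrict (\<lambda>f. ereal (f x)) A"

definition AX :: "'a topology \<Rightarrow> ('a \<Rightarrow> real) set \<Rightarrow> (('a \<Rightarrow> real) \<Rightarrow> ereal) set" where
  "AX X A = (AX_product A) closure_of (AX_embed A ` topspace X)"

end

theory Submission
  imports Defs
begin

text \<open>
  Every point x of the compactification is a limit of embedded points of X, simultaneously
  for finitely many coordinates. Hence if h is constantly c on the set where f lies in an open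
  neighbourhood of x(f), then x(h) = c. It therefore suffices to find h \<in> A(X), with values in
  [0, 1], that vanishes where f is near x0(f) and equals 1 where f is near the complement
  of an open neighbourhood S \<subseteq> U of x0(f). Such an h is built from the ramp g of adequacy
  composed with affine images of f, one ramp for each side of x0(f); the two sides are merged
  by applying g to their sum.
\<close>

lemma AX_value_eq_if_const_near:
  assumes "x \<in> AX X A" "f \<in> A" "h \<in> A" "open N" "x f \<in> N"
    and const: "\<forall>p\<in>topspace X. ereal (f p) \<in> N \<longrightarrow> h p = c"
  shows "x h = ereal c"
proof (rule ccontr)
  assume "x h \<noteq> ereal c"
  have proj: "continuous_map (AX_product A) euclidean (\<lambda>z. z k)" if "k \<in> A" for k
    unfolding AX_product_def using that by (rule continuous_map_product_projection)
  define T where "T = {z \<in> topspace (AX_product A). z f \<in> N} \<inter>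
    {z \<in> topspace (AX_product A). z h \<in> - {ereal c}}"
  have "openin (AX_product A) T"
    unfolding T_def using assms(4)
    by (intro openin_Int openin_continuous_map_preimage[OF proj] assms(2,3)) auto
  moreover have x_closure: "x \<in> AX_product A closure_of (AX_embed A ` topspace X)"
    using assms(1) unfolding AX_def .
  moreover have "x \<in> T"
    using x_closure \<open>x f \<in> N\<close> \<open>x h \<noteq> ereal c\<close> by (simp add: T_def in_closure_of)
  ultimately obtain p where "p \<in> topspace X" "AX_embed A p \<in> T"
    unfolding in_closure_of by blast
  with assms(2,3) const show False
    by (auto simp: AX_embed_def T_def)
qed

lemma adequate_add:
  assumes "adequate X A" "f \<in> A" "h \<in> A"
  shows "(\<lambda>p. f p + h p) \<in> A"
  using assms unfolding adequate_def is_subspace_CX_def by blast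

text \<open>The ramp (y - s) / (r - s) is 0 at s and 1 at r for either order of s and r, so one
  form serves for cutting off on both sides.\<close>

lemma adequate_obtain_ramp:
  assumes "adequate X A"
  obtains g :: "real \<Rightarrow> real"
  where "\<And>y. 0 \<le> g y" "\<And>y. g y \<le> 1" "\<And>y. y \<le> 0 \<Longrightarrow> g y = 0" "\<And>y. 1 \<le> y \<Longrightarrow> g y = 1"
    and "\<And>f s r. f \<in> A \<Longrightarrow> (\<lambda>p. g ((f p - s) / (r - s))) \<in> A"
proof -
  obtain g :: "real \<Rightarrow> real" where g: "mono g" "\<forall>y\<le>0. g y = 0" "\<forall>y\<ge>1. g y = 1"
    "\<forall>f\<in>A. g \<circ> f \<in> A"
    using assms unfolding adequate_def by blast
  have "0 \<le> g y" for y
    using g(1,2) monoD[OF g(1), of 0 y] by (cases "y \<le> 0") auto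
  moreover have "g y \<le> 1" for y
    using g(1,3) monoD[OF g(1), of y 1] by (cases "1 \<le> y") auto
  moreover have "(\<lambda>p. g ((f p - s) / (r - s))) \<in> A" if "f \<in> A" for f s r
  proof -
    have "(\<lambda>p. (1 / (r - s)) * f p) \<in> A" and "(\<lambda>p. - s / (r - s)) \<in> A"
      using assms that unfolding adequate_def is_subspace_CX_def by blast+
    then have "(\<lambda>p. (1 / (r - s)) * f p + - s / (r - s)) \<in> A"
      by (rule adequate_add[OF assms])
    then have "g \<circ> (\<lambda>p. (1 / (r - s)) * f p + - s / (r - s)) \<in> A"
      using g(4) by blast
    then show ?thesis
      by (simp add: o_def diff_divide_distrib)
  qed
  ultimately show ?thesis
    using that g(2,3) by blast
qed

definition cutoff_function ::
    "('a \<Rightarrow> real) set \<Rightarrow> ('a \<Rightarrow> real) \<Rightarrow> ereal \<Rightarrow> ereal set \<Rightarrow> ('a \<Rightarrow> real) \<Rightarrow> bool" where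
  "cutoff_function A f t C h \<longleftrightarrow> h \<in> A \<and> (\<forall>p. 0 \<le> h p \<and> h p \<le> 1) \<and>
     (\<exists>N. open N \<and> t \<in> N \<and> (\<forall>p. ereal (f p) \<in> N \<longrightarrow> h p = 0)) \<and>
     (\<exists>N. open N \<and> C \<subseteq> N \<and> (\<forall>p. ereal (f p) \<in> N \<longrightarrow> h p = 1))"

lemma cutoff_functionI:
  assumes "h \<in> A" "\<And>p. 0 \<le> h p" "\<And>p. h p \<le> 1"
    and "open N" "t \<in> N" "\<And>p. ereal (f p) \<in> N \<Longrightarrow> h p = 0"
    and "open N'" "C \<subseteq> N'" "\<And>p. ereal (f p) \<in> N' \<Longrightarrow> h p = 1"
  shows "cutoff_function A f t C h"
  unfolding cutoff_function_def using assms by blast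

lemma cutoff_function_subset:
  "cutoff_function A f t C h \<Longrightarrow> C' \<subseteq> C \<Longrightarrow> cutoff_function A f t C' h"
  unfolding cutoff_function_def by blast

lemma cutoff_function_atMost:
  assumes "adequate X A" "f \<in> A" "a < t"
  obtains h where "cutoff_function A f t {..a} h"
proof -
  obtain g :: "real \<Rightarrow> real" where g: "\<And>y. 0 \<le> g y" "\<And>y. g y \<le> 1"
    "\<And>y. y \<le> 0 \<Longrightarrow> g y = 0" "\<And>y. 1 \<le> y \<Longrightarrow> g y = 1"
    "\<And>f s r. f \<in> A \<Longrightarrow> (\<lambda>p. g ((f p - s) / (r - s))) \<in> A"
    using adequate_obtain_ramp[OF assms(1)] by blast
  obtain r where r: "a < ereal r" "ereal r < t" using ereal_dense2[OF assms(3)] by blast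
  obtain s where s: "ereal r < ereal s" "ereal s < t" using ereal_dense2[OF r(2)] by blast
  have "cutoff_function A f t {..a} (\<lambda>p. g ((f p - s) / (r - s)))"
  proof (rule cutoff_functionI[where N="{ereal s<..}" and N'="{..<ereal r}"])
    show "g ((f p - s) / (r - s)) = 0" if "ereal (f p) \<in> {ereal s<..}" for p
      using s that by (intro g(3)) (simp add: divide_nonneg_neg)
    show "g ((f p - s) / (r - s)) = 1" if "ereal (f p) \<in> {..<ereal r}" for p
      using s that by (intro g(4)) (simp add: le_divide_eq)
  qed (use g(1,2,5) assms(2) r s in auto)
  then show ?thesis ..
qed

lemma cutoff_function_atLeast:
  assumes "adequate X A" "f \<in> A" "t < b"
  obtains h where "cutoff_function A f t {b..} h"
proof -
  obtain g :: "real \<Rightarrow> real" where g: "\<And>y. 0 \<le> g y" "\<And>y. g y \<le> 1"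
    "\<And>y. y \<le> 0 \<Longrightarrow> g y = 0" "\<And>y. 1 \<le> y \<Longrightarrow> g y = 1"
    "\<And>f s r. f \<in> A \<Longrightarrow> (\<lambda>p. g ((f p - s) / (r - s))) \<in> A"
    using adequate_obtain_ramp[OF assms(1)] by blast
  obtain r where r: "t < ereal r" "ereal r < b" using ereal_dense2[OF assms(3)] by blast
  obtain s where s: "t < ereal s" "ereal s < ereal r" using ereal_dense2[OF r(1)] by blast
  have "cutoff_function A f t {b..} (\<lambda>p. g ((f p - s) / (r - s)))"
  proof (rule cutoff_functionI[where N="{..<ereal s}" and N'="{ereal r<..}"])
    show "g ((f p - s) / (r - s)) = 0" if "ereal (f p) \<in> {..<ereal s}" for p
      using s that by (intro g(3)) (simp add: divide_nonpos_pos)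
    show "g ((f p - s) / (r - s)) = 1" if "ereal (f p) \<in> {ereal r<..}" for p
      using s r that by (intro g(4)) (simp add: le_divide_eq)
  qed (use g(1,2,5) assms(2) r s in auto)
  then show ?thesis ..
qed

lemma cutoff_function_Un:
  assumes "adequate X A" "cutoff_function A f t C h" "cutoff_function A f t D k"
  obtains l where "cutoff_function A f t (C \<union> D) l"
proof -
  obtain g :: "real \<Rightarrow> real" where g: "\<And>y. 0 \<le> g y" "\<And>y. g y \<le> 1"
    "\<And>y. y \<le> 0 \<Longrightarrow> g y = 0" "\<And>y. 1 \<le> y \<Longrightarrow> g y = 1"
    "\<And>f s r. f \<in> A \<Longrightarrow> (\<lambda>p. g ((f p - s) / (r - s))) \<in> A"
    using adequate_obtain_ramp[OF assms(1)] by blast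
  obtain Nh Nh' where h: "h \<in> A" "\<forall>p. 0 \<le> h p" "open Nh" "t \<in> Nh" "open Nh'" "C \<subseteq> Nh'"
    "\<forall>p. ereal (f p) \<in> Nh \<longrightarrow> h p = 0" "\<forall>p. ereal (f p) \<in> Nh' \<longrightarrow> h p = 1"
    using assms(2) unfolding cutoff_function_def by blast
  obtain Nk Nk' where k: "k \<in> A" "\<forall>p. 0 \<le> k p" "open Nk" "t \<in> Nk" "open Nk'" "D \<subseteq> Nk'"
    "\<forall>p. ereal (f p) \<in> Nk \<longrightarrow> k p = 0" "\<forall>p. ereal (f p) \<in> Nk' \<longrightarrow> k p = 1"
    using assms(3) unfolding cutoff_function_def by blast
  have "(\<lambda>p. g (h p + k p)) \<in> A"
    using g(5)[OF adequate_add[OF assms(1) h(1) k(1)], of 0 1] by simp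
  then have "cutoff_function A f t (C \<union> D) (\<lambda>p. g (h p + k p))"
  proof (rule cutoff_functionI[where N="Nh \<inter> Nk" and N'="Nh' \<union> Nk'"])
    show "g (h p + k p) = 0" if "ereal (f p) \<in> Nh \<inter> Nk" for p
      using h(7) k(7) g(3) that by simp
    show "g (h p + k p) = 1" if "ereal (f p) \<in> Nh' \<union> Nk'" for p
      using h(2,8) k(2,8) that by (intro g(4)) fastforce
  qed (use g(1,2) h k in auto)
  then show ?thesis ..
qed

lemma cutoff_function_Compl:
  assumes "adequate X A" "f \<in> A" "open S" "t \<in> S"
  obtains h where "cutoff_function A f t (- S) h"
proof (cases t)
  case (real r)
  then obtain a b where "a < t" "t < b" "{a<..<b} \<subseteq> S"
    using ereal_open_cont_interval2[OF assms(3,4)] by auto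
  then have "- S \<subseteq> {..a} \<union> {b..}"
    by (auto simp: subset_eq not_le)
  moreover obtain h k where "cutoff_function A f t {..a} h" "cutoff_function A f t {b..} k"
    using cutoff_function_atMost cutoff_function_atLeast assms(1,2) \<open>a < t\<close> \<open>t < b\<close> by metis
  then obtain l where "cutoff_function A f t ({..a} \<union> {b..}) l"
    using cutoff_function_Un[OF assms(1)] by blast
  ultimately show ?thesis
    using that cutoff_function_subset by blast
next
  case PInf
  then obtain M where "{ereal M<..} \<subseteq> S" using open_PInfty2[OF assms(3)] assms(4) by auto
  then have "- S \<subseteq> {..ereal M}"
    by (auto simp: subset_eq not_less)
  moreover have "ereal M < t" using PInf by simp
  then obtain h where "cutoff_function A f t {..ereal M} h"
    using cutoff_function_atMost[OF assms(1,2)] by blast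
  ultimately show ?thesis
    using that cutoff_function_subset by blast
next
  case MInf
  then obtain M where "{..<ereal M} \<subseteq> S" using open_MInfty2[OF assms(3)] assms(4) by auto
  then have "- S \<subseteq> {ereal M..}"
    by (auto simp: subset_eq not_less)
  moreover have "t < ereal M" using MInf by simp
  then obtain h where "cutoff_function A f t {ereal M..} h"
    using cutoff_function_atLeast[OF assms(1,2)] by blast
  ultimately show ?thesis
    using that cutoff_function_subset by blast
qed

theorem lemma3p2:
  fixes X :: "'a topology" and A :: "('a \<Rightarrow> real) set"
    and x0 :: "('a \<Rightarrow> real) \<Rightarrow> ereal" and f :: "'a \<Rightarrow> real" and U :: "ereal set"
  assumes "completely_regular_space X" and "Hausdorff_space X"
    and "adequate X A"
    and "x0 \<in> AX X A" and "f \<in> A"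
    and "\<exists>S. open S \<and> x0 f \<in> S \<and> S \<subseteq> U"
  shows "\<exists>h\<in>A. (\<forall>x\<in>topspace X. 0 \<le> h x \<and> h x \<le> 1) \<and> x0 h = 0 \<and>
           {x \<in> AX X A. x h < 1} \<subseteq> {x \<in> AX X A. x f \<in> U}"
proof -
  obtain S where S: "open S" "x0 f \<in> S" "S \<subseteq> U" using assms(6) by blast
  obtain h where "cutoff_function A f (x0 f) (- S) h"
    using cutoff_function_Compl[OF assms(3,5) S(1,2)] .
  then obtain N N' where h: "h \<in> A" "\<forall>p. 0 \<le> h p \<and> h p \<le> 1" "open N" "x0 f \<in> N"
    "\<forall>p. ereal (f p) \<in> N \<longrightarrow> h p = 0" "open N'" "- S \<subseteq> N'"
    "\<forall>p. ereal (f p) \<in> N' \<longrightarrow> h p = 1"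
    unfolding cutoff_function_def by blast
  have "x0 h = ereal 0"
    using assms(4,5) h by (intro AX_value_eq_if_const_near[where x=x0 and h=h and N=N]) auto
  moreover have "x f \<in> U" if "x \<in> AX X A" "x h < 1" for x
  proof (rule ccontr)
    assume "x f \<notin> U"
    then have "x f \<in> N'" using S(3) h(7) by blast
    then have "x h = ereal 1"
      using that(1) assms(5) h by (intro AX_value_eq_if_const_near[where x=x and h=h and N=N']) auto
    with \<open>x h < 1\<close> show False by simp
  qed
  ultimately show ?thesis using h(1,2) by (auto simp: zero_ereal_def)
qed

end
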